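(* Let $X\subseteq A^{\mathbb{N}}$ be a (one-sided) sofic shift over a finite alphabet $A$ with exactly one periodic point. Then this periodic point is $a^\omega$ for some letter $a\in A$, $X$ is countable, and for any bijection $\pi\colon A\to\{0,\dots,|A|-1\}$ with $\pi(a)=0$ the set $\pi(X)\subseteq\mathbb{N}^{\mathbb{N}}$ has finite coding dimension.
   Context: A one-sided sofic shift is the set of labels of right-infinite paths in a finite edge-labeled graph. A periodic point is $\mathbf{x}\in X$ with $\mathbf{x}=u^\omega$ for some nonempty word $u$. $\pi$ is applied letterwise. The coding dimension of $Y\subseteq\mathbb{N}^{\mathbb{N}}$ is the least $d\in\mathbb{N}$ with $\sum_iy_i\le d$ for all $\mathbf{y}\in Y$, if it exists. *)

theory Defs
  imports Main "HOL-Library.Countable_Set"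
begin

definition sofic_shift_of :: "('v \<times> 'a \<times> 'v) set \<Rightarrow> (nat \<Rightarrow> 'a) set" where
  "sofic_shift_of E = {x. \<exists>p :: nat \<Rightarrow> 'v. \<forall>i. (p i, x i, p (Suc i)) \<in> E}"

definition is_sofic :: "(nat \<Rightarrow> 'a) set \<Rightarrow> bool" where
  "is_sofic X \<longleftrightarrow> (\<exists>(E :: (nat \<times> 'a \<times> nat) set). finite E \<and> X = sofic_shift_of E)"

definition omega_word :: "'a list \<Rightarrow> nat \<Rightarrow> 'a" where
  "omega_word u = (\<lambda>i. u ! (i mod length u))"

definition periodic_points :: "(nat \<Rightarrow> 'a) set \<Rightarrow> (nat \<Rightarrow> 'a) set" where
  "periodic_points X = {x \<in> X. \<exists>u. u \<noteq> [] \<and> x = omega_word u}"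

text \<open>Y has finite coding dimension: there is d with sum_i y_i <= d for all y in Y
  (the series of naturals, valued in N \<union> {\<infinity>}, is bounded by d iff all partial sums are).\<close>
definition finite_coding_dimension :: "(nat \<Rightarrow> nat) set \<Rightarrow> bool" where
  "finite_coding_dimension Y \<longleftrightarrow> (\<exists>d::nat. \<forall>y\<in>Y. \<forall>n. (\<Sum>i<n. y i) \<le> d)"

end

theory Submission
  imports Defs
begin

text \<open>The shift of a sofic shift stays in it, and the shift of a periodic point is periodic; so a
  unique periodic point is shift-invariant, i.e. a constant sequence \<open>a\<^sup>\<omega>\<close>. In a path presenting
  some \<open>x \<in> X\<close>, two visits to the same vertex close a loop, whose label is a periodic point of \<open>X\<close>;
  hence every position where \<open>x\<close> differs from \<open>a\<close> is visited by the path at a vertex seen nowhere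
  else on it. Thus \<open>x\<close> differs from \<open>a\<close> in at most as many positions as the graph has vertices,
  which gives both countability and a uniform bound on the coding sums.\<close>

lemma shift_mem_sofic_shift_of:
  assumes "x \<in> sofic_shift_of E"
  shows "(\<lambda>i. x (Suc i)) \<in> sofic_shift_of E"
proof -
  obtain p where "\<forall>i. (p i, x i, p (Suc i)) \<in> E"
    using assms unfolding sofic_shift_of_def by blast
  then show ?thesis
    unfolding sofic_shift_of_def by (intro CollectI exI[where x="\<lambda>i. p (Suc i)"]) simp
qed

lemma shift_omega_word:
  assumes "u \<noteq> []"
  shows "(\<lambda>i. omega_word u (Suc i)) = omega_word (map (\<lambda>k. omega_word u (Suc k)) [0..<length u])"
proof
  fix i
  have "omega_word (map (\<lambda>k. omega_word u (Suc k)) [0..<length u]) i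
      = omega_word u (Suc (i mod length u))"
    using assms by (simp add: omega_word_def)
  also have "\<dots> = omega_word u (Suc i)"
    unfolding omega_word_def by (simp only: mod_Suc_eq)
  finally show "omega_word u (Suc i) = omega_word (map (\<lambda>k. omega_word u (Suc k)) [0..<length u]) i" ..
qed

lemma shift_mem_periodic_points:
  assumes "x \<in> periodic_points (sofic_shift_of E)"
  shows "(\<lambda>i. x (Suc i)) \<in> periodic_points (sofic_shift_of E)"
proof -
  obtain u where u: "u \<noteq> []" "x = omega_word u" and x: "x \<in> sofic_shift_of E"
    using assms unfolding periodic_points_def by blast
  then show ?thesis
    unfolding periodic_points_def using shift_omega_word[OF u(1)] shift_mem_sofic_shift_of[OF x]
    by (intro CollectI conjI exI[where x="map (\<lambda>k. omega_word u (Suc k)) [0..<length u]"]) auto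
qed

lemma unique_periodic_point_const:
  assumes "periodic_points (sofic_shift_of E) = {x}"
  shows "x = (\<lambda>_. x 0)"
proof -
  have shift: "(\<lambda>i. x (Suc i)) = x"
    using shift_mem_periodic_points[of x E] assms by blast
  have "x i = x 0" for i
    by (induction i) (use fun_cong[OF shift] in auto)
  then show ?thesis by blast
qed

lemma loop_label_mem_sofic_shift_of:
  assumes p: "\<forall>k. (p k, x k, p (Suc k)) \<in> E" and "i < j" and loop: "p i = p j"
  shows "omega_word (map (\<lambda>k. x (i + k)) [0..<j - i]) \<in> sofic_shift_of E"
proof -
  define L where "L = j - i"
  have L: "L > 0" using \<open>i < j\<close> L_def by simp
  define q where "q = (\<lambda>k. p (i + k mod L))"
  have "(q k, omega_word (map (\<lambda>k. x (i + k)) [0..<L]) k, q (Suc k)) \<in> E" for k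
  proof -
    have km: "k mod L < L" using L by simp
    have label: "omega_word (map (\<lambda>k. x (i + k)) [0..<L]) k = x (i + k mod L)"
      using km by (simp add: omega_word_def)
    have Suc_mod: "Suc k mod L = Suc (k mod L) mod L" by (simp only: mod_Suc_eq)
    have "q (Suc k) = p (Suc (i + k mod L))"
    proof (cases "Suc (k mod L) < L")
      case True
      then show ?thesis unfolding q_def Suc_mod by simp
    next
      case False
      then have wrap: "Suc (k mod L) = L" using km by simp
      then have "q (Suc k) = p j" unfolding q_def Suc_mod using loop by simp
      also have "j = Suc (i + k mod L)" using wrap L_def \<open>i < j\<close> by simp
      finally show ?thesis .
    qed
    then show ?thesis using p label unfolding q_def by simp
  qed
  then show ?thesis unfolding sofic_shift_of_def L_def by blast
qed

lemma card_non_const_positions_le: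
  assumes "finite E"
    and periodic: "periodic_points (sofic_shift_of E) \<subseteq> {\<lambda>_. a}"
    and x: "x \<in> sofic_shift_of E"
  shows "finite {i. x i \<noteq> a} \<and> card {i. x i \<noteq> a} \<le> card (fst ` E)"
proof -
  let ?D = "{i. x i \<noteq> a}"
  obtain p where p: "\<forall>k. (p k, x k, p (Suc k)) \<in> E"
    using x unfolding sofic_shift_of_def by blast
  have no_return: "p i \<noteq> p j" if "i < j" "x i \<noteq> a" for i j
  proof
    assume "p i = p j"
    let ?u = "map (\<lambda>k. x (i + k)) [0..<j - i]"
    have "omega_word ?u \<in> periodic_points (sofic_shift_of E)"
      unfolding periodic_points_def using loop_label_mem_sofic_shift_of[OF p \<open>i < j\<close> \<open>p i = p j\<close>] \<open>i < j\<close>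
      by (intro CollectI conjI exI[where x="?u"]) auto
    then have "omega_word ?u 0 = a" using periodic by auto
    then show False using that by (simp add: omega_word_def)
  qed
  have inj: "inj_on p ?D"
  proof (rule inj_onI)
    fix i j assume "i \<in> ?D" "j \<in> ?D" "p i = p j"
    then show "i = j" using no_return[of i j] no_return[of j i] by (cases i j rule: linorder_cases) auto
  qed
  have sub: "p ` ?D \<subseteq> fst ` E"
    using p by (auto intro: rev_image_eqI)
  have fin: "finite ?D"
    using finite_imageD[OF finite_subset[OF sub] inj] \<open>finite E\<close> by simp
  have "card ?D = card (p ` ?D)" using card_image[OF inj] by simp
  also have "\<dots> \<le> card (fst ` E)" using card_mono[OF _ sub] \<open>finite E\<close> by simp
  finally show ?thesis using fin by simp
qed

lemma countable_finitely_non_const: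
  fixes a :: "'a::countable"
  shows "countable {x. finite {i::nat. x i \<noteq> a}}"
proof -
  define f where "f = (\<lambda>l::'a list. \<lambda>i. if i < length l then l ! i else a)"
  have "{x. finite {i::nat. x i \<noteq> a}} \<subseteq> f ` UNIV"
  proof
    fix x assume "x \<in> {x. finite {i::nat. x i \<noteq> a}}"
    then obtain M where "{i. x i \<noteq> a} \<subseteq> {..<M}"
      using finite_nat_bounded by blast
    then have "x = f (map x [0..<M])"
      unfolding f_def by (auto intro!: ext)
    then show "x \<in> f ` UNIV" by blast
  qed
  then show ?thesis
    by (rule countable_subset) (intro countable_image countableI_type)
qed

lemma sum_le_mult_card_support:
  fixes y :: "nat \<Rightarrow> nat"
  assumes "finite S" and "\<And>i. i \<notin> S \<Longrightarrow> y i = 0" and "\<And>i. y i \<le> C"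
  shows "(\<Sum>i<n. y i) \<le> C * card S"
proof -
  have "(\<Sum>i<n. y i) = (\<Sum>i\<in>{..<n} \<inter> S. y i)"
    using assms(2) by (intro sum.mono_neutral_right) auto
  also have "\<dots> \<le> (\<Sum>i\<in>{..<n} \<inter> S. C)"
    using assms(3) by (rule sum_mono)
  also have "\<dots> = C * card ({..<n} \<inter> S)" by simp
  also have "\<dots> \<le> C * card S"
    using assms(1) by (intro mult_le_mono2 card_mono) auto
  finally show ?thesis .
qed

lemma finite_coding_dimension_image:
  assumes "\<And>x. x \<in> X \<Longrightarrow> finite {i. x i \<noteq> a} \<and> card {i. x i \<noteq> a} \<le> k"
    and "\<pi> a = 0" and "\<And>c. \<pi> c \<le> C"
  shows "finite_coding_dimension ((\<lambda>x. \<pi> \<circ> x) ` X)"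
  unfolding finite_coding_dimension_def
proof (intro exI ballI allI)
  fix y n assume "y \<in> (\<lambda>x. \<pi> \<circ> x) ` X"
  then obtain x where x: "x \<in> X" and y: "y = \<pi> \<circ> x" by blast
  have "(\<Sum>i<n. y i) \<le> C * card {i. x i \<noteq> a}"
    using assms x unfolding y by (intro sum_le_mult_card_support) auto
  also have "\<dots> \<le> C * k" using assms(1)[OF x] by simp
  finally show "(\<Sum>i<n. y i) \<le> C * k" .
qed

theorem mainTheorem13:
  fixes X :: "(nat \<Rightarrow> 'a::finite) set"
  assumes "is_sofic X"
    and "\<exists>!x. x \<in> periodic_points X"
  shows "\<exists>a. periodic_points X = {(\<lambda>_. a)}
           \<and> countable X
           \<and> (\<forall>\<pi> :: 'a \<Rightarrow> nat. bij_betw \<pi> UNIV {0..<card (UNIV :: 'a set)} \<and> \<pi> a = 0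
                \<longrightarrow> finite_coding_dimension ((\<lambda>x. \<pi> \<circ> x) ` X))"
proof -
  obtain E :: "(nat \<times> 'a \<times> nat) set" where "finite E" and X: "X = sofic_shift_of E"
    using assms(1) unfolding is_sofic_def by blast
  obtain x0 where "periodic_points X = {x0}"
    using assms(2) by blast
  then have periodic: "periodic_points X = {\<lambda>_. x0 0}"
    using unique_periodic_point_const[of E x0] X by simp
  let ?a = "x0 0"
  have support: "finite {i. x i \<noteq> ?a} \<and> card {i. x i \<noteq> ?a} \<le> card (fst ` E)" if "x \<in> X" for x
    using card_non_const_positions_le[OF \<open>finite E\<close>] periodic X that by simp
  have "X \<subseteq> {x. finite {i. x i \<noteq> ?a}}"
    using support by blast
  then have "countable X"
    using countable_finitely_non_const by (rule countable_subset)
  moreover have "finite_coding_dimension ((\<lambda>x. \<pi> \<circ> x) ` X)"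
    if \<pi>: "bij_betw \<pi> UNIV {0..<card (UNIV :: 'a set)}" and "\<pi> ?a = 0" for \<pi> :: "'a \<Rightarrow> nat"
  proof -
    have "\<pi> c \<le> card (UNIV :: 'a set)" for c
      using bij_betwE[OF \<pi>, rule_format, of c] by simp
    with support \<open>\<pi> ?a = 0\<close> show ?thesis
      by (rule finite_coding_dimension_image)
  qed
  ultimately show ?thesis
    using periodic by (intro exI[of _ ?a] conjI allI impI) auto
qed

end
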